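(* Let $K$ be a field, $S=K[x_1,\ldots,x_n]$, and $\alpha=(k_1,\ldots,k_n)\in\mathbb N^n$. A monomial ideal $I\subset S$ is weakly polymatroidal if and only if its expansion $I^\alpha\subset S^\alpha$ is weakly polymatroidal.
   Context: $\mathbb N$ denotes the positive integers. For $\alpha=(k_1,\ldots,k_n)\in\mathbb N^n$ let $S^\alpha=K[x_{ij}:1\le i\le n,\ 1\le j\le k_i]$ and $P_i=(x_{i1},\ldots,x_{ik_i})\subset S^\alpha$. If $I$ is a monomial ideal with minimal monomial generating set $G(I)=\{\mathbf x^{\mathbf a_1},\ldots,\mathbf x^{\mathbf a_r}\}$, its expansion is $I^\alpha=\sum_{l=1}^r P_1^{\mathbf a_l(1)}\cdots P_n^{\mathbf a_l(n)}\subset S^\alpha$. A monomial ideal $I$ in a polynomial ring $K[x_1,\ldots,x_n]$ is weakly polymatroidal with respect to the ordering $x_1>\cdots>x_n$ if for every two monomials $u=x_1^{a_1}\cdots x_n^{a_n}$ and $v=x_1^{b_1}\cdots x_n^{b_n}$ in $G(I)$ with $a_1=b_1,\ldots,a_{t-1}=b_{t-1}$ and $a_t>b_t$, there exists $j>t$ such that $x_t(v/x_j)\in I$. $I$ is weakly polymatroidal if it is weakly polymatroidal with respect to some ordering of the variables. *)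

theory Defs
  imports Main
begin

text \<open>Monomials in the variables of a finite variable set V (variables of type 'v) are
exponent vectors 'v => nat vanishing outside V.  A monomial ideal of K[V] is identified with
the set of monomials it contains (it is spanned over K by them); this set is closed under
multiplication by monomials. Divisibility of monomials is the pointwise order.\<close>

definition mons :: "'v set \<Rightarrow> ('v \<Rightarrow> nat) set" where
  "mons V = {a. \<forall>x. x \<notin> V \<longrightarrow> a x = 0}"

definition monomial_ideal :: "'v set \<Rightarrow> ('v \<Rightarrow> nat) set \<Rightarrow> bool" where
  "monomial_ideal V I \<longleftrightarrow> I \<subseteq> mons V \<and> (\<forall>u\<in>I. \<forall>w\<in>mons V. u \<le> w \<longrightarrow> w \<in> I)"

definition mingens :: "('v \<Rightarrow> nat) set \<Rightarrow> ('v \<Rightarrow> nat) set" where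
  "mingens I = {u \<in> I. \<forall>w\<in>I. w \<le> u \<longrightarrow> w = u}"

definition gen :: "'v set \<Rightarrow> ('v \<Rightarrow> nat) set \<Rightarrow> ('v \<Rightarrow> nat) set" where
  "gen V G = {w \<in> mons V. \<exists>g\<in>G. g \<le> w}"

definition imult :: "'v set \<Rightarrow> ('v \<Rightarrow> nat) set \<Rightarrow> ('v \<Rightarrow> nat) set \<Rightarrow> ('v \<Rightarrow> nat) set" where
  "imult V A B = gen V {(\<lambda>x. a x + b x) | a b. a \<in> A \<and> b \<in> B}"

fun ipow :: "'v set \<Rightarrow> ('v \<Rightarrow> nat) set \<Rightarrow> nat \<Rightarrow> ('v \<Rightarrow> nat) set" where
  "ipow V A 0 = gen V {\<lambda>_. 0}"
| "ipow V A (Suc m) = imult V A (ipow V A m)"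

text \<open>Weakly polymatroidal with respect to the ordering ord!0 > ord!1 > ... of the variables.
The monomial x_t (v / x_j) is only formed when x_j divides v.\<close>
definition weakly_polymatroidal_wrt :: "('v \<Rightarrow> nat) set \<Rightarrow> 'v list \<Rightarrow> bool" where
  "weakly_polymatroidal_wrt I ord \<longleftrightarrow>
    (\<forall>u\<in>mingens I. \<forall>v\<in>mingens I. \<forall>t<length ord.
       ((\<forall>s<t. u (ord!s) = v (ord!s)) \<and> u (ord!t) > v (ord!t)) \<longrightarrow>
       (\<exists>j. t < j \<and> j < length ord \<and> v (ord!j) > 0 \<and>
            (let w = v(ord!j := v (ord!j) - 1) in w(ord!t := w (ord!t) + 1)) \<in> I))"

definition weakly_polymatroidal :: "'v set \<Rightarrow> ('v \<Rightarrow> nat) set \<Rightarrow> bool" where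
  "weakly_polymatroidal V I \<longleftrightarrow>
    (\<exists>ord. distinct ord \<and> set ord = V \<and> weakly_polymatroidal_wrt I ord)"

text \<open>Expansion. Variables of S are 0..<n; variables of S^alpha are pairs (i,j), i<n, j<k i
(0-indexed versions of x_{i,j}).\<close>
definition expvars :: "nat \<Rightarrow> (nat \<Rightarrow> nat) \<Rightarrow> (nat \<times> nat) set" where
  "expvars n k = {(i, j). i < n \<and> j < k i}"

definition Pideal :: "nat \<Rightarrow> (nat \<Rightarrow> nat) \<Rightarrow> nat \<Rightarrow> (nat \<times> nat \<Rightarrow> nat) set" where
  "Pideal n k i = gen (expvars n k) {(\<lambda>y. if y = (i, j) then 1 else 0) | j. j < k i}"

fun Pprod :: "nat \<Rightarrow> (nat \<Rightarrow> nat) \<Rightarrow> (nat \<Rightarrow> nat) \<Rightarrow> nat \<Rightarrow> (nat \<times> nat \<Rightarrow> nat) set" where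
  "Pprod n k a 0 = gen (expvars n k) {\<lambda>_. 0}"
| "Pprod n k a (Suc m) = imult (expvars n k) (Pprod n k a m) (ipow (expvars n k) (Pideal n k m) (a m))"

definition expansion :: "nat \<Rightarrow> (nat \<Rightarrow> nat) \<Rightarrow> (nat \<Rightarrow> nat) set \<Rightarrow> (nat \<times> nat \<Rightarrow> nat) set" where
  "expansion n k I = (\<Union>a\<in>mingens I. Pprod n k a n)"

end

theory Submission
  imports Defs
begin

text \<open>
  The monomial map \<open>x\<^sub>i\<^sub>j \<mapsto> x\<^sub>i\<close> identifies \<open>I\<^sup>\<alpha>\<close> with the monomials whose image lies in
  \<open>I\<close>, and \<open>G(I\<^sup>\<alpha>)\<close> with those whose image lies in \<open>G(I)\<close>. Given an ordering of the
  variables of \<open>S\<close> for which \<open>I\<close> is weakly polymatroidal, order the variables of \<open>S\<^sup>\<alpha>\<close>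
  lexicographically by block and then by index. Let two generators \<open>u, v\<close> of \<open>I\<^sup>\<alpha>\<close> first differ
  at \<open>x\<^sub>i\<^sub>j\<close>, with the smaller exponent in \<open>v\<close>. If the image of \<open>v\<close> has smaller degree in
  \<open>x\<^sub>i\<close> than that of \<open>u\<close>, the images first differ at \<open>x\<^sub>i\<close> and the exchange in \<open>I\<close> lifts to an
  exchange between blocks. Otherwise \<open>v\<close> is divisible by a later variable \<open>x\<^sub>i\<^sub>j\<^sub>'\<close> of the same
  block, and exchanging it for \<open>x\<^sub>i\<^sub>j\<close> does not change the image. Conversely, an ordering
  for \<open>I\<^sup>\<alpha>\<close> restricted to the variables \<open>x\<^sub>i\<^sub>1\<close> yields one for \<open>I\<close>, since \<open>x\<^sub>i \<mapsto> x\<^sub>i\<^sub>1\<close> maps \<open>G(I)\<close> into \<open>G(I\<^sup>\<alpha>)\<close>.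
\<close>

lemma mem_gen_iff: "w \<in> gen V G \<longleftrightarrow> w \<in> mons V \<and> (\<exists>g\<in>G. g \<le> w)"
  by (simp add: gen_def)

lemma mem_imult_iff: "w \<in> imult V A B \<longleftrightarrow> w \<in> mons V \<and> (\<exists>a\<in>A. \<exists>b\<in>B. (\<lambda>x. a x + b x) \<le> w)"
  unfolding imult_def mem_gen_iff by blast

lemma finite_mons_below:
  assumes "finite V"
  shows "finite {b \<in> mons V. b \<le> x}"
proof (rule finite_subset)
  show "{b \<in> mons V. b \<le> x} \<subseteq>
      {b. \<forall>y. (y \<in> V \<longrightarrow> b y \<in> {..sum x V}) \<and> (y \<notin> V \<longrightarrow> b y = 0)}"
    using member_le_sum[OF _ _ assms, of _ x]
    by (auto simp: mons_def le_fun_def intro: order_trans)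
  show "finite {b. \<forall>y. (y \<in> V \<longrightarrow> b y \<in> {..sum x V}) \<and> (y \<notin> V \<longrightarrow> b y = 0)}"
    using assms by (intro finite_set_of_finite_funs) auto
qed

lemma mingens_below:
  assumes "finite V" and "I \<subseteq> mons V" and "x \<in> I"
  shows "\<exists>a\<in>mingens I. a \<le> x"
proof -
  have "finite {b \<in> I. b \<le> x}"
    by (rule finite_subset[OF _ finite_mons_below[OF assms(1), of x]]) (use assms(2) in auto)
  then obtain m where m: "m \<in> I" "m \<le> x" and min: "\<forall>b\<in>I. b \<le> m \<longrightarrow> b \<le> x \<longrightarrow> m = b"
    using finite_has_minimal2[of "{b \<in> I. b \<le> x}" x] assms(3) by auto
  have "m \<in> mingens I"
    using m min by (auto simp: mingens_def intro: order_trans)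
  then show ?thesis using m by blast
qed

text \<open>\<open>shift v x z\<close> is the monomial \<open>x (v / z)\<close>; the subtraction is truncated, so it is only
meaningful when \<open>0 < v z\<close>.\<close>

definition shift :: "('v \<Rightarrow> nat) \<Rightarrow> 'v \<Rightarrow> 'v \<Rightarrow> ('v \<Rightarrow> nat)" where
  "shift v x z = (let w = v(z := v z - 1) in w(x := w x + 1))"

lemma shift_mons: "v \<in> mons V \<Longrightarrow> x \<in> V \<Longrightarrow> shift v x z \<in> mons V"
  by (auto simp: mons_def shift_def Let_def)

lemma shift_self: "0 < v x \<Longrightarrow> shift v x x = v"
  by (auto simp: shift_def Let_def)

section \<open>Orderings given by rank functions\<close>

text \<open>The ordering of the variables is encoded by an injective rank function \<open>f\<close>: \<open>x\<close> precedes
\<open>y\<close> iff \<open>f x < f y\<close>. This avoids list positions and allows orderings to be built by arithmetic.\<close>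

definition weakly_polymatroidal_rank :: "('v \<Rightarrow> nat) set \<Rightarrow> 'v set \<Rightarrow> ('v \<Rightarrow> nat) \<Rightarrow> bool" where
  "weakly_polymatroidal_rank I V f \<longleftrightarrow>
    (\<forall>u\<in>mingens I. \<forall>v\<in>mingens I. \<forall>x\<in>V.
       (\<forall>y\<in>V. f y < f x \<longrightarrow> u y = v y) \<and> v x < u x \<longrightarrow>
       (\<exists>z\<in>V. f x < f z \<and> 0 < v z \<and> shift v x z \<in> I))"

lemma weakly_polymatroidal_wrt_iff_rank:
  assumes rank: "\<And>i j. i < length ord \<Longrightarrow> j < length ord \<Longrightarrow> f (ord!i) < f (ord!j) \<longleftrightarrow> i < j"
  shows "weakly_polymatroidal_wrt I ord \<longleftrightarrow> weakly_polymatroidal_rank I (set ord) f"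
proof -
  have earlier: "(\<forall>s<t. u (ord!s) = v (ord!s)) \<longleftrightarrow> (\<forall>y\<in>set ord. f y < f (ord!t) \<longrightarrow> u y = v y)"
    if t: "t < length ord" for u v :: "'a \<Rightarrow> nat" and t
  proof
    show "\<forall>y\<in>set ord. f y < f (ord!t) \<longrightarrow> u y = v y" if "\<forall>s<t. u (ord!s) = v (ord!s)"
      using that rank[OF _ t] by (auto simp: in_set_conv_nth)
    show "\<forall>s<t. u (ord!s) = v (ord!s)" if "\<forall>y\<in>set ord. f y < f (ord!t) \<longrightarrow> u y = v y"
      using that rank[OF _ t] t by (metis nth_mem order.strict_trans)
  qed
  have later: "(\<exists>j. t < j \<and> j < length ord \<and> 0 < v (ord!j) \<and> shift v (ord!t) (ord!j) \<in> I) \<longleftrightarrow>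
      (\<exists>z\<in>set ord. f (ord!t) < f z \<and> 0 < v z \<and> shift v (ord!t) z \<in> I)"
    if "t < length ord" for v t
    using rank[OF that] by (auto simp: in_set_conv_nth) (use nth_mem in blast)+
  have "weakly_polymatroidal_wrt I ord \<longleftrightarrow> (\<forall>u\<in>mingens I. \<forall>v\<in>mingens I. \<forall>t<length ord.
      (\<forall>s<t. u (ord!s) = v (ord!s)) \<and> v (ord!t) < u (ord!t) \<longrightarrow>
      (\<exists>j. t < j \<and> j < length ord \<and> 0 < v (ord!j) \<and> shift v (ord!t) (ord!j) \<in> I))"
    by (simp add: weakly_polymatroidal_wrt_def shift_def)
  also have "\<dots> \<longleftrightarrow> (\<forall>u\<in>mingens I. \<forall>v\<in>mingens I. \<forall>t<length ord.
      (\<forall>y\<in>set ord. f y < f (ord!t) \<longrightarrow> u y = v y) \<and> v (ord!t) < u (ord!t) \<longrightarrow>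
      (\<exists>z\<in>set ord. f (ord!t) < f z \<and> 0 < v z \<and> shift v (ord!t) z \<in> I))"
    using earlier later by simp
  also have "\<dots> \<longleftrightarrow> weakly_polymatroidal_rank I (set ord) f"
    unfolding weakly_polymatroidal_rank_def by (simp only: all_set_conv_all_nth)
  finally show ?thesis .
qed

lemma weakly_polymatroidal_iff_rank:
  assumes "finite V"
  shows "weakly_polymatroidal V I \<longleftrightarrow> (\<exists>f. inj_on f V \<and> weakly_polymatroidal_rank I V f)"
proof
  assume "weakly_polymatroidal V I"
  then obtain ord where ord: "distinct ord" "set ord = V" "weakly_polymatroidal_wrt I ord"
    unfolding weakly_polymatroidal_def by blast
  define f where "f = the_inv_into {..<length ord} ((!) ord)"
  have bij: "bij_betw ((!) ord) {..<length ord} V"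
    using ord by (simp add: bij_betw_nth)
  then have "f (ord!i) = i" if "i < length ord" for i
    using that by (simp add: f_def bij_betw_def the_inv_into_f_f)
  then have "weakly_polymatroidal_rank I V f"
    using ord weakly_polymatroidal_wrt_iff_rank[of ord f I] by simp
  moreover have "inj_on f V"
    using bij_betw_the_inv_into[OF bij] unfolding f_def by (simp add: bij_betw_def)
  ultimately show "\<exists>f. inj_on f V \<and> weakly_polymatroidal_rank I V f" by blast
next
  assume "\<exists>f. inj_on f V \<and> weakly_polymatroidal_rank I V f"
  then obtain f where f: "inj_on f V" "weakly_polymatroidal_rank I V f" by blast
  interpret folding_insort_key "(\<le>)" "(<)" V f
    using f(1) by unfold_locales
  obtain ord where sorted: "sorted_wrt (<) (map f ord)" and ord: "set ord = V"
    using finite_set_strict_sorted[OF order_refl assms] by blast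
  have rank: "f (ord!i) < f (ord!j) \<longleftrightarrow> i < j" if "i < length ord" "j < length ord" for i j
    using that sorted_wrt_nth_less[OF sorted, of i j] sorted_wrt_nth_less[OF sorted, of j i]
    by (cases i j rule: linorder_cases) auto
  then have "distinct ord"
    unfolding distinct_conv_nth by (metis less_irrefl linorder_neqE_nat)
  then show "weakly_polymatroidal V I"
    unfolding weakly_polymatroidal_def
    using ord f(2) weakly_polymatroidal_wrt_iff_rank[of ord f I, OF rank] by blast
qed

section \<open>The expansion through the collapsing map\<close>

definition collapse :: "(nat \<Rightarrow> nat) \<Rightarrow> (nat \<times> nat \<Rightarrow> nat) \<Rightarrow> nat \<Rightarrow> nat" where
  "collapse k w = (\<lambda>i. \<Sum>j<k i. w (i, j))"

lemma collapse_mono: "u \<le> w \<Longrightarrow> collapse k u \<le> collapse k w"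
  unfolding collapse_def le_fun_def by (auto intro: sum_mono)

lemma collapse_add: "collapse k (\<lambda>x. a x + b x) i = collapse k a i + collapse k b i"
  by (simp add: collapse_def sum.distrib)

lemma collapse_indicator:
  "collapse k (\<lambda>y. if y = (p, q) then 1 else 0) i = (if i = p \<and> q < k p then 1 else 0)"
  by (auto simp: collapse_def sum.delta)

lemma collapse_pos_iff: "0 < collapse k w i \<longleftrightarrow> (\<exists>j<k i. 0 < w (i, j))"
  unfolding collapse_def neq0_conv[symmetric] sum_eq_0_iff[OF finite_lessThan] by auto

lemma collapse_mons: "w \<in> mons (expvars n k) \<Longrightarrow> collapse k w \<in> mons {..<n}"
  by (auto simp: mons_def expvars_def collapse_def)

lemma ipow_Pideal:
  assumes "i < n"
  shows "ipow (expvars n k) (Pideal n k i) e = {w \<in> mons (expvars n k). e \<le> collapse k w i}"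
proof (induction e)
  case 0
  show ?case by (auto simp: mem_gen_iff le_fun_def)
next
  case (Suc e)
  let ?E = "expvars n k"
  let ?var = "\<lambda>j. \<lambda>y. if y = (i, j) then 1 else 0 :: nat"
  have "w \<in> imult ?E (Pideal n k i) (ipow ?E (Pideal n k i) e) \<longleftrightarrow> w \<in> mons ?E \<and> Suc e \<le> collapse k w i"
    for w
  proof
    assume "w \<in> imult ?E (Pideal n k i) (ipow ?E (Pideal n k i) e)"
    then obtain a b j where w: "w \<in> mons ?E" and j: "j < k i" "?var j \<le> a"
      and b: "b \<in> ipow ?E (Pideal n k i) e" and ab: "(\<lambda>x. a x + b x) \<le> w"
      by (auto simp: mem_imult_iff Pideal_def mem_gen_iff)
    have "1 \<le> collapse k a i"
      using le_funD[OF collapse_mono[OF j(2)], of k i] j(1) by (simp add: collapse_indicator)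
    moreover have "collapse k a i + collapse k b i \<le> collapse k w i"
      using collapse_mono[OF ab, of k] by (simp add: le_fun_def collapse_add)
    ultimately show "w \<in> mons ?E \<and> Suc e \<le> collapse k w i"
      using w b Suc by simp
  next
    assume w: "w \<in> mons ?E \<and> Suc e \<le> collapse k w i"
    then have "0 < collapse k w i" by simp
    then obtain j where j: "j < k i" "0 < w (i, j)"
      by (auto simp: collapse_pos_iff)
    define b where "b = (\<lambda>y. w y - ?var j y)"
    have ab: "(\<lambda>y. ?var j y + b y) = w"
      using j by (auto simp: b_def)
    have "?var j \<in> Pideal n k i"
      using assms j by (auto simp: Pideal_def mem_gen_iff mons_def expvars_def)
    moreover have "b \<in> ipow ?E (Pideal n k i) e"
      using w Suc collapse_add[of k "?var j" b i] j
      by (auto simp: ab collapse_indicator b_def mons_def)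
    ultimately show "w \<in> imult ?E (Pideal n k i) (ipow ?E (Pideal n k i) e)"
      using w ab by (auto simp: mem_imult_iff)
  qed
  then show ?case by auto
qed

lemma Pprod_eq:
  assumes "m \<le> n"
  shows "Pprod n k a m = {w \<in> mons (expvars n k). \<forall>i<m. a i \<le> collapse k w i}"
  using assms
proof (induction m)
  case 0
  show ?case by (auto simp: mem_gen_iff le_fun_def)
next
  case (Suc m)
  let ?E = "expvars n k"
  have IH: "Pprod n k a m = {w \<in> mons ?E. \<forall>i<m. a i \<le> collapse k w i}"
    and pow: "ipow ?E (Pideal n k m) (a m) = {w \<in> mons ?E. a m \<le> collapse k w m}"
    using Suc ipow_Pideal[of m n] by simp_all
  have "w \<in> Pprod n k a (Suc m) \<longleftrightarrow> w \<in> mons ?E \<and> (\<forall>i<Suc m. a i \<le> collapse k w i)" for w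
  proof
    assume "w \<in> Pprod n k a (Suc m)"
    then obtain b c where w: "w \<in> mons ?E" and b: "\<forall>i<m. a i \<le> collapse k b i"
      and c: "a m \<le> collapse k c m" and bc: "(\<lambda>x. b x + c x) \<le> w"
      by (auto simp: mem_imult_iff IH pow)
    have "collapse k b i \<le> collapse k w i \<and> collapse k c i \<le> collapse k w i" for i
      using le_funD[OF collapse_mono[OF bc], of k i] by (simp add: collapse_add)
    then show "w \<in> mons ?E \<and> (\<forall>i<Suc m. a i \<le> collapse k w i)"
      using w b c by (metis le_trans less_Suc_eq)
  next
    assume w: "w \<in> mons ?E \<and> (\<forall>i<Suc m. a i \<le> collapse k w i)"
    define b where "b = (\<lambda>p. if fst p = m then 0 else w p)"
    define c where "c = (\<lambda>p. if fst p = m then w p else 0)"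
    have "b \<in> Pprod n k a m"
      using w by (auto simp: IH b_def mons_def collapse_def)
    moreover have "c \<in> ipow ?E (Pideal n k m) (a m)"
      using w by (auto simp: pow c_def mons_def collapse_def)
    moreover have "(\<lambda>x. b x + c x) = w"
      by (auto simp: b_def c_def)
    ultimately show "w \<in> Pprod n k a (Suc m)"
      using w by (auto simp: mem_imult_iff)
  qed
  then show ?case by auto
qed

lemma expansion_eq:
  assumes I: "monomial_ideal {..<n} I"
  shows "expansion n k I = {w \<in> mons (expvars n k). collapse k w \<in> I}"
proof -
  have "(\<exists>a\<in>mingens I. \<forall>i<n. a i \<le> collapse k w i) \<longleftrightarrow> collapse k w \<in> I"
    if w: "w \<in> mons (expvars n k)" for w
  proof
    assume "\<exists>a\<in>mingens I. \<forall>i<n. a i \<le> collapse k w i"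
    then obtain a where a: "a \<in> I" and le: "\<forall>i<n. a i \<le> collapse k w i"
      by (auto simp: mingens_def)
    have "a i \<le> collapse k w i" for i
      using le a I by (cases "i < n") (auto simp: monomial_ideal_def mons_def)
    then have "a \<le> collapse k w"
      by (simp add: le_fun_def)
    then show "collapse k w \<in> I"
      using I a collapse_mons[OF w] by (auto simp: monomial_ideal_def)
  next
    assume "collapse k w \<in> I"
    moreover have "I \<subseteq> mons {..<n}"
      using I by (simp add: monomial_ideal_def)
    ultimately obtain a where "a \<in> mingens I" "a \<le> collapse k w"
      using mingens_below[OF finite_lessThan] by blast
    then show "\<exists>a\<in>mingens I. \<forall>i<n. a i \<le> collapse k w i"
      by (auto simp: le_fun_def)
  qed
  then show ?thesis
    unfolding expansion_def using Pprod_eq[of n n k] by auto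
qed

lemma exists_le_fun_with_sum:
  fixes f :: "nat \<Rightarrow> nat"
  assumes "c \<le> (\<Sum>j<K. f j)"
  shows "\<exists>g\<le>f. (\<Sum>j<K. g j) = c"
  using assms
proof (induction K arbitrary: c)
  case 0
  then show ?case by (intro exI[of _ "\<lambda>_. 0"]) (auto simp: le_fun_def)
next
  case (Suc K)
  show ?case
  proof (cases "c \<le> (\<Sum>j<K. f j)")
    case True
    then obtain g where "g \<le> f" "(\<Sum>j<K. g j) = c"
      using Suc.IH by blast
    then show ?thesis
      by (intro exI[of _ "g(K := 0)"]) (auto simp: le_fun_def)
  next
    case False
    then show ?thesis
      using Suc.prems by (intro exI[of _ "f(K := c - (\<Sum>j<K. f j))"]) (auto simp: le_fun_def)
  qed
qed

lemma exists_le_with_collapse: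
  assumes w: "w \<in> mons (expvars n k)" and c: "c \<le> collapse k w"
  shows "\<exists>w'\<in>mons (expvars n k). w' \<le> w \<and> collapse k w' = c"
proof -
  have "\<forall>i. \<exists>h. h \<le> (\<lambda>j. w (i, j)) \<and> (\<Sum>j<k i. h j) = c i"
    using exists_le_fun_with_sum le_funD[OF c] by (simp add: collapse_def)
  then have "\<exists>g. \<forall>i. g i \<le> (\<lambda>j. w (i, j)) \<and> (\<Sum>j<k i. g i j) = c i"
    by (rule choice)
  then obtain g where g: "\<And>i. g i \<le> (\<lambda>j. w (i, j)) \<and> (\<Sum>j<k i. g i j) = c i"
    by blast
  define w' where "w' = (\<lambda>(i, j). g i j)"
  have le: "w' \<le> w"
    using g by (auto simp: w'_def le_fun_def)
  moreover have "w' \<in> mons (expvars n k)"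
    unfolding mons_def
  proof (intro CollectI allI impI)
    fix y assume "y \<notin> expvars n k"
    then show "w' y = 0"
      using w le_funD[OF le, of y] by (simp add: mons_def del: split_paired_All)
  qed
  moreover have "collapse k w' = c"
    using g by (auto simp: collapse_def w'_def)
  ultimately show ?thesis by blast
qed

lemma eq_if_le_and_collapse_eq:
  assumes "u \<le> w" "u \<in> mons (expvars n k)" "w \<in> mons (expvars n k)" "collapse k u = collapse k w"
  shows "u = w"
proof
  fix p :: "nat \<times> nat"
  obtain i j where p: "p = (i, j)" by fastforce
  show "u p = w p"
  proof (cases "j < k i")
    case True
    have "(\<Sum>j<k i. u (i, j)) = (\<Sum>j<k i. w (i, j))"
      using assms(4) unfolding collapse_def by metis
    then show ?thesis
      using sum_mono_inv[of "\<lambda>j. u (i, j)" "{..<k i}" "\<lambda>j. w (i, j)" j] assms(1) True p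
      by (simp add: le_fun_def)
  next
    case False
    then show ?thesis using assms(2,3) p by (auto simp: mons_def expvars_def)
  qed
qed

lemma mingens_expansion:
  assumes I: "monomial_ideal {..<n} I"
  shows "mingens (expansion n k I) = {w \<in> mons (expvars n k). collapse k w \<in> mingens I}"
proof (intro set_eqI iffI)
  fix w assume "w \<in> mingens (expansion n k I)"
  then have w: "w \<in> mons (expvars n k)" "collapse k w \<in> I"
    and min: "\<And>w'. w' \<in> expansion n k I \<Longrightarrow> w' \<le> w \<Longrightarrow> w' = w"
    unfolding mingens_def expansion_eq[OF I] by auto
  have "c = collapse k w" if c: "c \<in> I" "c \<le> collapse k w" for c
  proof -
    obtain w' where w': "w' \<in> mons (expvars n k)" "w' \<le> w" "collapse k w' = c"
      using exists_le_with_collapse[OF w(1) c(2)] by blast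
    then have "w' = w"
      using min c(1) by (simp add: expansion_eq[OF I])
    then show ?thesis using w' by simp
  qed
  then show "w \<in> {w \<in> mons (expvars n k). collapse k w \<in> mingens I}"
    using w by (auto simp: mingens_def)
next
  fix w assume w: "w \<in> {w \<in> mons (expvars n k). collapse k w \<in> mingens I}"
  have "w' = w" if "w' \<in> expansion n k I" "w' \<le> w" for w'
  proof -
    have "collapse k w' = collapse k w"
      using w that collapse_mono[OF that(2)] by (auto simp: expansion_eq[OF I] mingens_def)
    then show ?thesis
      using eq_if_le_and_collapse_eq[OF that(2)] w that by (auto simp: expansion_eq[OF I])
  qed
  then show "w \<in> mingens (expansion n k I)"
    using w by (auto simp: mingens_def expansion_eq[OF I])
qed

lemma collapse_shift:
  assumes xz: "(i, j) \<noteq> (l, j')" and "j < k i" "j' < k l" and pos: "0 < v (l, j')"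
  shows "collapse k (shift v (i, j) (l, j')) = shift (collapse k v) i l"
proof
  fix p
  let ?s = "shift v (i, j) (l, j')"
  let ?var = "\<lambda>q r. \<lambda>y. if y = (q, r) then 1 else 0 :: nat"
  have "(\<lambda>y. ?s y + ?var l j' y) = (\<lambda>y. v y + ?var i j y)"
    using xz pos by (auto simp: shift_def Let_def)
  then have "collapse k ?s p + (if p = l then 1 else 0) = collapse k v p + (if p = i then 1 else 0)"
    using collapse_add[of k ?s "?var l j'" p] collapse_add[of k v "?var i j" p] assms(2,3)
    by (simp add: collapse_indicator)
  moreover have "0 < collapse k v l"
    using member_le_sum[of j' "{..<k l}" "\<lambda>j. v (l, j)"] assms(3) pos
    by (simp add: collapse_def)
  ultimately show "collapse k ?s p = shift (collapse k v) i l p"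
    by (auto simp: shift_def Let_def split: if_splits)
qed

section \<open>Transfer of the exchange property\<close>

lemma exists_pos_after_first_difference:
  fixes a b :: "nat \<Rightarrow> nat"
  assumes prefix: "\<forall>j'<j. a j' = b j'" and less: "a j < b j" and "j < K"
    and total: "(\<Sum>j<K. b j) \<le> (\<Sum>j<K. a j)"
  shows "\<exists>j'. j < j' \<and> j' < K \<and> 0 < a j'"
proof (rule ccontr)
  assume "\<not> ?thesis"
  then have "(\<Sum>j<K. a j) = (\<Sum>j'<Suc j. a j')"
    using \<open>j < K\<close> by (intro sum.mono_neutral_right) auto
  also have "\<dots> < (\<Sum>j'<Suc j. b j')"
    using prefix less by simp
  also have "\<dots> \<le> (\<Sum>j<K. b j)"
    using \<open>j < K\<close> by (intro sum_mono2) auto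
  finally show False
    using total by simp
qed

text \<open>Variables of \<open>S\<^sup>\<alpha>\<close> are ordered by block first and by index inside a block, provided \<open>M\<close>
bounds every block length.\<close>

definition lex_rank :: "(nat \<Rightarrow> nat) \<Rightarrow> nat \<Rightarrow> nat \<times> nat \<Rightarrow> nat" where
  "lex_rank f M = (\<lambda>(i, j). f i * M + j)"

lemma lex_rank_less_iff:
  assumes "j < M" "j' < M"
  shows "lex_rank f M (i, j) < lex_rank f M (i', j') \<longleftrightarrow> f i < f i' \<or> (f i = f i' \<and> j < j')"
proof -
  have less: "a * M + r < b * M + r'" if "a < b" "r < M" for a b r r' :: nat
  proof -
    have "Suc a * M \<le> b * M" using that(1) by (intro mult_le_mono1) simp
    then show ?thesis using that(2) by simp
  qed
  show ?thesis
    using less[of "f i" "f i'" j j'] less[of "f i'" "f i" j' j] assms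
    by (cases "f i" "f i'" rule: linorder_cases) (auto simp: lex_rank_def)
qed

lemma inj_on_lex_rank:
  assumes f: "inj_on f {..<n}" and M: "\<forall>i<n. k i \<le> M"
  shows "inj_on (lex_rank f M) (expvars n k)"
proof (rule inj_onI, clarify)
  fix i j i' j' assume ij: "(i, j) \<in> expvars n k" "(i', j') \<in> expvars n k"
    and eq: "lex_rank f M (i, j) = lex_rank f M (i', j')"
  then have "j < M" "j' < M" using M by (auto simp: expvars_def)
  then have "f i = f i' \<and> j = j'"
    using eq lex_rank_less_iff[of j M j' f i i'] lex_rank_less_iff[of j' M j f i' i] by auto
  then show "i = i' \<and> j = j'"
    using f ij by (auto simp: expvars_def inj_on_eq_iff)
qed

lemma weakly_polymatroidal_rank_expansion:
  assumes I: "monomial_ideal {..<n} I" and wp: "weakly_polymatroidal_rank I {..<n} f"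
    and M: "\<forall>i<n. k i \<le> M"
  shows "weakly_polymatroidal_rank (expansion n k I) (expvars n k) (lex_rank f M)"
  unfolding weakly_polymatroidal_rank_def
proof (intro ballI impI)
  let ?E = "expvars n k" and ?g = "lex_rank f M"
  fix u v x
  assume u: "u \<in> mingens (expansion n k I)" and v: "v \<in> mingens (expansion n k I)"
    and "x \<in> ?E" and H: "(\<forall>y\<in>?E. ?g y < ?g x \<longrightarrow> u y = v y) \<and> v x < u x"
  then obtain i j where x: "x = (i, j)" "i < n" "j < k i"
    by (auto simp: expvars_def)
  have uv: "v \<in> mons ?E" "collapse k u \<in> mingens I" "collapse k v \<in> mingens I"
    using u v by (auto simp: mingens_expansion[OF I])
  have bound: "j < M" "j' < M" if "j' < k l" "l < n" for l j'
    using M x that by (auto intro: less_le_trans)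
  have rank: "?g (i, j) < ?g (l, j') \<longleftrightarrow> f i < f l \<or> (f i = f l \<and> j < j')" if "j' < k l" "l < n" for l j'
    using lex_rank_less_iff[of j M j' f i l] bound[OF that] by simp
  have agree: "u (l, j') = v (l, j')" if "j' < k l" "l < n" "f l < f i \<or> (l = i \<and> j' < j)" for l j'
    using H that x lex_rank_less_iff[of j' M j f l i] bound[OF that(1,2)] by (auto simp: expvars_def)
  have into_expansion: "shift v x z \<in> expansion n k I" if "collapse k (shift v x z) \<in> I" for z
    using that shift_mons[OF uv(1) \<open>x \<in> ?E\<close>] by (simp add: expansion_eq[OF I])
  show "\<exists>z\<in>?E. ?g x < ?g z \<and> 0 < v z \<and> shift v x z \<in> expansion n k I"
  proof (cases "collapse k v i < collapse k u i")
    case True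
    have "collapse k u l = collapse k v l" if "l < n" "f l < f i" for l
      using agree that by (simp add: collapse_def)
    then obtain l where l: "l < n" "f i < f l" "0 < collapse k v l" "shift (collapse k v) i l \<in> I"
      using wp uv True x unfolding weakly_polymatroidal_rank_def by blast
    then obtain j' where j': "j' < k l" "0 < v (l, j')"
      by (auto simp: collapse_pos_iff)
    have "collapse k (shift v x (l, j')) = shift (collapse k v) i l"
      using collapse_shift[of i j l j' k v] j' l x by fastforce
    then have "shift v x (l, j') \<in> expansion n k I"
      using into_expansion l(4) by simp
    moreover have "?g x < ?g (l, j')" "(l, j') \<in> ?E"
      using rank[OF j'(1) l(1)] l j' x by (simp_all add: expvars_def)
    ultimately show ?thesis
      using j'(2) by blast
  next
    case False
    have "\<forall>j'<j. v (i, j') = u (i, j')"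
      using agree[of _ i] x by simp
    moreover have "v (i, j) < u (i, j)"
      using H x by simp
    moreover have "(\<Sum>j<k i. u (i, j)) \<le> (\<Sum>j<k i. v (i, j))"
      using False by (simp add: collapse_def)
    ultimately obtain j' where j': "j < j'" "j' < k i" "0 < v (i, j')"
      using exists_pos_after_first_difference[of j "\<lambda>j. v (i, j)" "\<lambda>j. u (i, j)" "k i"] x(3)
      by blast
    then have "0 < collapse k v i"
      using collapse_pos_iff by blast
    have "collapse k (shift v x (i, j')) = shift (collapse k v) i i"
      using collapse_shift[of i j i j' k v] j' x by simp
    also have "\<dots> = collapse k v"
      using shift_self \<open>0 < collapse k v i\<close> .
    finally have "shift v x (i, j') \<in> expansion n k I"
      using into_expansion uv(3) by (simp add: mingens_def)
    moreover have "?g x < ?g (i, j')" "(i, j') \<in> ?E"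
      using rank[OF j'(2) x(2)] j' x by (simp_all add: expvars_def)
    ultimately show ?thesis
      using j'(3) by blast
  qed
qed

text \<open>The substitution \<open>x\<^sub>i \<mapsto> x\<^sub>i\<^sub>1\<close> (the first variable of a block has index 0 here).\<close>

definition lift_first :: "(nat \<Rightarrow> nat) \<Rightarrow> nat \<times> nat \<Rightarrow> nat" where
  "lift_first a = (\<lambda>(i, j). if j = 0 then a i else 0)"

lemma lift_first_mons:
  "a \<in> mons {..<n} \<Longrightarrow> \<forall>i<n. 1 \<le> k i \<Longrightarrow> lift_first a \<in> mons (expvars n k)"
  by (auto simp: lift_first_def mons_def expvars_def)

lemma collapse_lift_first:
  assumes "a \<in> mons {..<n}" and "\<forall>i<n. 1 \<le> k i"
  shows "collapse k (lift_first a) = a"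
proof
  fix i
  show "collapse k (lift_first a) i = a i"
  proof (cases "i < n")
    case True
    then have "0 < k i"
      using assms(2) by auto
    moreover have "{..<k i} = insert 0 {1..<k i}"
      using calculation by auto
    ultimately show ?thesis
      by (simp add: collapse_def lift_first_def)
  next
    case False
    then show ?thesis using assms(1) by (simp add: collapse_def lift_first_def mons_def)
  qed
qed

lemma weakly_polymatroidal_rank_of_expansion:
  assumes k: "\<forall>i<n. 1 \<le> k i" and I: "monomial_ideal {..<n} I"
    and wp: "weakly_polymatroidal_rank (expansion n k I) (expvars n k) g"
  shows "weakly_polymatroidal_rank I {..<n} (\<lambda>i. g (i, 0))"
  unfolding weakly_polymatroidal_rank_def
proof (intro ballI impI)
  let ?E = "expvars n k"
  fix u v i
  assume u: "u \<in> mingens I" and v: "v \<in> mingens I" and i: "i \<in> {..<n}"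
    and H: "(\<forall>l\<in>{..<n}. g (l, 0) < g (i, 0) \<longrightarrow> u l = v l) \<and> v i < u i"
  have uv: "u \<in> mons {..<n}" "v \<in> mons {..<n}"
    using u v I by (auto simp: mingens_def monomial_ideal_def)
  have "lift_first u \<in> mingens (expansion n k I)" "lift_first v \<in> mingens (expansion n k I)"
    using u v uv k by (simp_all add: mingens_expansion[OF I] lift_first_mons collapse_lift_first)
  moreover have "(i, 0) \<in> ?E"
    using i k by (auto simp: expvars_def)
  moreover have "\<forall>y\<in>?E. g y < g (i, 0) \<longrightarrow> lift_first u y = lift_first v y"
    using H by (auto simp: lift_first_def expvars_def)
  moreover have "lift_first v (i, 0) < lift_first u (i, 0)"
    using H by (simp add: lift_first_def)
  ultimately obtain z where z: "z \<in> ?E" "g (i, 0) < g z" "0 < lift_first v z"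
    and shift: "shift (lift_first v) (i, 0) z \<in> expansion n k I"
    using wp unfolding weakly_polymatroidal_rank_def by blast
  then obtain l where l: "z = (l, 0)" "l < n" "0 < v l"
    by (auto simp: lift_first_def expvars_def split: if_splits)
  have "i \<noteq> l" "0 < k i" "0 < k l"
    using z(2) l i k by auto
  then have "collapse k (shift (lift_first v) (i, 0) (l, 0)) = shift v i l"
    using collapse_shift[of i 0 l 0 k "lift_first v"] collapse_lift_first[OF uv(2) k] z l
    by simp
  then have "shift v i l \<in> I"
    using shift l(1) by (simp add: expansion_eq[OF I])
  then show "\<exists>l\<in>{..<n}. g (i, 0) < g (l, 0) \<and> 0 < v l \<and> shift v i l \<in> I"
    using z l by blast
qed

theorem theorem1p4:
  fixes n :: nat and k :: "nat \<Rightarrow> nat" and I :: "(nat \<Rightarrow> nat) set"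
  assumes "\<forall>i<n. k i \<ge> 1"
    and "monomial_ideal {..<n} I"
  shows "weakly_polymatroidal {..<n} I \<longleftrightarrow> weakly_polymatroidal (expvars n k) (expansion n k I)"
proof -
  have "finite (expvars n k)"
    by (rule finite_subset[of _ "SIGMA i:{..<n}. {..<k i}"]) (auto simp: expvars_def)
  note iff_rank = weakly_polymatroidal_iff_rank[OF finite_lessThan] weakly_polymatroidal_iff_rank[OF this]
  have M: "\<forall>i<n. k i \<le> (\<Sum>i<n. k i)"
    by (simp add: member_le_sum)
  have "inj_on (\<lambda>i. g (i, 0)) {..<n}" if "inj_on g (expvars n k)" for g :: "nat \<times> nat \<Rightarrow> nat"
    using assms(1) by (intro inj_onI) (auto simp: expvars_def Suc_le_eq dest: inj_onD[OF that])
  then show ?thesis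
    unfolding iff_rank
    using inj_on_lex_rank[OF _ M] weakly_polymatroidal_rank_expansion[OF assms(2) _ M]
      weakly_polymatroidal_rank_of_expansion[OF assms] by blast
qed

end
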